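(* Let $p\ge 1$ and let $\sigma$ be a permutation of $[n]$ with exactly $p$ non-left-to-right-maxima that belongs to the basis $\mathcal{B}_{p-1}$. Write $\sigma_{k+1}=n$ and assume $k\ge 1$. Let $\pi$ be the permutation of $[k]$ order-isomorphic to $\sigma_1\sigma_2\cdots\sigma_k$. Then $\pi$ has exactly $p-n+k+1$ non-left-to-right-maxima and $\pi$ belongs to the basis $\mathcal{B}_{p-n+k}$.
   Context: A right-jump transforms $\sigma=\sigma_1\cdots\sigma_n$ into $\sigma_1\cdots\sigma_{i-1}\sigma_{i+1}\cdots\sigma_j\sigma_i\sigma_{j+1}\cdots\sigma_n$ for some $1\le i<j\le n$. A left-to-right maximum of $\sigma$ is an entry $\sigma_i$ with $\sigma_k<\sigma_i$ for all $k<i$; every other entry is a non-left-to-right-maximum. A permutation $\pi$ is a pattern of $\sigma$ (written $\pi\prec\sigma$) if some subsequence of $\sigma$ is order-isomorphic to $\pi$. $\mathcal{C}_q$ is the set of all permutations (of any length $n$) obtainable from the identity $12\cdots n$ by at most $q$ right-jumps. The basis $\mathcal{B}_q$ is the set of permutations $\sigma\notin\mathcal{C}_q$ such that every pattern $\pi\prec\sigma$ with $\pi\ne\sigma$ lies in $\mathcal{C}_q$. *)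

theory Defs
  imports Main
begin

definition is_perm :: "nat list \<Rightarrow> bool" where
  "is_perm \<sigma> \<longleftrightarrow> distinct \<sigma> \<and> set \<sigma> = {1..length \<sigma>}"

text \<open>Right-jump (0-indexed positions i < j): the entry at position i is moved
  to just after the entry at position j.\<close>
definition right_jump :: "nat list \<Rightarrow> nat list \<Rightarrow> bool" where
  "right_jump \<sigma> \<tau> \<longleftrightarrow> (\<exists>i j. i < j \<and> j < length \<sigma> \<and>
     \<tau> = take i \<sigma> @ take (j - i) (drop (i + 1) \<sigma>) @ [\<sigma> ! i] @ drop (j + 1) \<sigma>)"

definition C :: "nat \<Rightarrow> nat list set" where
  "C q = {\<sigma>. \<exists>n m. m \<le> q \<and> (right_jump ^^ m) [1..<Suc n] \<sigma>}"

definition order_iso :: "nat list \<Rightarrow> nat list \<Rightarrow> bool" where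
  "order_iso xs ys \<longleftrightarrow> length xs = length ys \<and>
     (\<forall>a < length xs. \<forall>b < length xs. xs ! a < xs ! b \<longleftrightarrow> ys ! a < ys ! b)"

definition pattern :: "nat list \<Rightarrow> nat list \<Rightarrow> bool" where
  "pattern \<pi> \<sigma> \<longleftrightarrow> is_perm \<pi> \<and> (\<exists>I. I \<subseteq> {..<length \<sigma>} \<and> order_iso \<pi> (nths \<sigma> I))"

definition basis :: "nat \<Rightarrow> nat list set" where
  "basis q = {\<sigma>. is_perm \<sigma> \<and> \<sigma> \<notin> C q \<and> (\<forall>\<pi>. pattern \<pi> \<sigma> \<and> \<pi> \<noteq> \<sigma> \<longrightarrow> \<pi> \<in> C q)}"

definition nlrm :: "nat list \<Rightarrow> nat" where
  "nlrm \<sigma> = card {i. i < length \<sigma> \<and> \<not> (\<forall>k < i. \<sigma> ! k < \<sigma> ! i)}"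

end

theory Submission
  imports Defs
begin

text \<open>Every right-jump creates at most one new non-left-to-right maximum, and conversely every
  permutation with m non-left-to-right maxima is reached from the identity by m right-jumps
  (undo one jump at a time: move the first non-maximum leftwards to where it becomes a maximum).
  Hence C q consists exactly of the permutations with at most q non-left-to-right maxima, and
  the basis element \<sigma> has exactly p of them while each proper pattern has at most p - 1.
  Splitting \<sigma> = A n D at its maximum n, every entry of D is a non-maximum, so a pattern
  X n D with X a subsequence of A has nlrm X + |D| non-maxima; this transfers both properties
  from \<sigma> to the standardization \<pi> of A, with the budget shifted by |D| = n - k - 1.\<close>

fun nlrm_after :: "nat list \<Rightarrow> nat list \<Rightarrow> nat" where
  "nlrm_after pre [] = 0"
| "nlrm_after pre (y # ys) =
     (if \<exists>z\<in>set pre. y \<le> z then 1 else 0) + nlrm_after (pre @ [y]) ys"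

lemma card_less_Suc_split:
  "card {i. i < Suc m \<and> P i} = (if P 0 then 1 else 0) + card {i. i < m \<and> P (Suc i)}"
proof -
  have split: "{i. i < Suc m \<and> P i} = (if P 0 then {0} else {}) \<union> Suc ` {i. i < m \<and> P (Suc i)}"
    by (auto simp: less_Suc_eq_0_disj image_iff)
  have "card ((if P 0 then {0} else {}) \<union> Suc ` {i. i < m \<and> P (Suc i)})
     = card (if P 0 then {0::nat} else {}) + card (Suc ` {i. i < m \<and> P (Suc i)})"
    by (rule card_Un_disjoint) auto
  also have "card (Suc ` {i. i < m \<and> P (Suc i)}) = card {i. i < m \<and> P (Suc i)}"
    by (rule card_image) auto
  finally show ?thesis using split by simp
qed

lemma nlrm_after_eq_card:
  "nlrm_after pre ys = card {i. i < length ys \<and> (\<exists>z\<in>set (pre @ take i ys). ys ! i \<le> z)}"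
proof (induction ys arbitrary: pre)
  case (Cons y ys)
  show ?case
    using Cons.IH[of "pre @ [y]"] by (simp only: length_Cons card_less_Suc_split) simp
qed simp

lemma nlrm_eq_nlrm_after: "nlrm xs = nlrm_after [] xs"
proof -
  have "(\<exists>z\<in>set (take i xs). xs ! i \<le> z) \<longleftrightarrow> (\<exists>k<i. xs ! i \<le> xs ! k)" if "i < length xs" for i
  proof
    assume "\<exists>z\<in>set (take i xs). xs ! i \<le> z"
    then obtain k where "k < length (take i xs)" "xs ! i \<le> take i xs ! k"
      by (auto simp: in_set_conv_nth)
    then show "\<exists>k<i. xs ! i \<le> xs ! k" by auto
  next
    assume "\<exists>k<i. xs ! i \<le> xs ! k"
    then obtain k where "k < i" "xs ! i \<le> xs ! k" by blast
    then show "\<exists>z\<in>set (take i xs). xs ! i \<le> z"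
      using that by (intro bexI[of _ "xs ! k"]) (auto simp: in_set_conv_nth intro!: exI[of _ k])
  qed
  then have "{i. i < length xs \<and> \<not> (\<forall>k < i. xs ! k < xs ! i)} =
             {i. i < length xs \<and> (\<exists>z\<in>set ([] @ take i xs). xs ! i \<le> z)}"
    by (auto simp: not_less)
  then show ?thesis by (simp add: nlrm_def nlrm_after_eq_card)
qed

lemma nlrm_after_append: "nlrm_after pre (xs @ ys) = nlrm_after pre xs + nlrm_after (pre @ xs) ys"
  by (induction xs arbitrary: pre) auto

lemma nlrm_after_mono:
  assumes "\<And>y. \<exists>z\<in>set pre. y \<le> z \<Longrightarrow> \<exists>z\<in>set pre'. y \<le> z"
  shows "nlrm_after pre ys \<le> nlrm_after pre' ys"
  using assms
proof (induction ys arbitrary: pre pre')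
  case (Cons y ys)
  have "nlrm_after (pre @ [y]) ys \<le> nlrm_after (pre' @ [y]) ys"
    by (rule Cons.IH) (use Cons.prems in auto)
  then show ?case using Cons.prems by auto
qed simp

lemma nlrm_after_cong:
  assumes "\<And>y. (\<exists>z\<in>set pre. y \<le> z) \<longleftrightarrow> (\<exists>z\<in>set pre'. y \<le> z)"
  shows "nlrm_after pre ys = nlrm_after pre' ys"
  by (rule antisym; rule nlrm_after_mono) (simp_all add: assms)

lemma nlrm_after_le_length: "nlrm_after pre ys \<le> length ys"
proof (induction ys arbitrary: pre)
  case (Cons y ys)
  then show ?case using Cons.IH[of "pre @ [y]"] by (simp add: le_SucI)
qed simp

lemma nlrm_after_eq_length: "\<forall>y\<in>set ys. \<exists>z\<in>set pre. y \<le> z \<Longrightarrow> nlrm_after pre ys = length ys"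
  by (induction ys arbitrary: pre) auto

lemma nlrm_after_eq_0_iff:
  "nlrm_after pre ys = 0 \<longleftrightarrow> sorted_wrt (<) ys \<and> (\<forall>z\<in>set pre. \<forall>y\<in>set ys. z < y)"
proof (induction ys arbitrary: pre)
  case (Cons y ys)
  have "nlrm_after pre (y # ys) = 0 \<longleftrightarrow> (\<forall>z\<in>set pre. z < y) \<and> nlrm_after (pre @ [y]) ys = 0"
    by (auto simp: not_le not_less)
  also have "\<dots> \<longleftrightarrow> (\<forall>z\<in>set pre. z < y) \<and> sorted_wrt (<) ys \<and>
      (\<forall>z\<in>set (pre @ [y]). \<forall>w\<in>set ys. z < w)"
    using Cons.IH[of "pre @ [y]"] by simp
  also have "\<dots> \<longleftrightarrow> sorted_wrt (<) (y # ys) \<and> (\<forall>z\<in>set pre. \<forall>w\<in>set (y # ys). z < w)"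
    by auto
  finally show ?case .
qed simp

lemma nlrm_after_nonzeroE:
  assumes "nlrm_after pre ys \<noteq> 0"
  obtains A x D where "ys = A @ x # D" and "\<exists>z\<in>set (pre @ A). x \<le> z"
  using assms
proof (induction ys arbitrary: pre thesis)
  case (Cons y ys)
  show ?case
  proof (cases "\<exists>z\<in>set pre. y \<le> z")
    case True
    then show ?thesis by (intro Cons.prems(1)[of "[]"]) auto
  next
    case False
    then have "nlrm_after (pre @ [y]) ys \<noteq> 0" using Cons.prems(2) by simp
    then show ?thesis
      by (rule Cons.IH[rotated]) (rule Cons.prems(1)[of "y # _"], auto)
  qed
qed simp

lemma nlrm_append_max:
  assumes "\<forall>y\<in>set X. y < x" and "\<forall>y\<in>set D. y \<le> x"
  shows "nlrm (X @ x # D) = nlrm X + length D"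
  using assms nlrm_after_append[of "[]" X "x # D"] nlrm_after_eq_length[of D "X @ [x]"]
  by (auto simp: not_le nlrm_eq_nlrm_after)

lemma right_jumpE:
  assumes "right_jump \<sigma> \<tau>"
  obtains A x B D where "\<sigma> = A @ x # B @ D" and "\<tau> = A @ B @ x # D"
proof -
  obtain i j where ij: "i < j" "j < length \<sigma>"
    and \<tau>: "\<tau> = take i \<sigma> @ take (j - i) (drop (i + 1) \<sigma>) @ [\<sigma> ! i] @ drop (j + 1) \<sigma>"
    using assms unfolding right_jump_def by blast
  have "drop (i + 1) \<sigma> = take (j - i) (drop (i + 1) \<sigma>) @ drop (j + 1) \<sigma>"
  proof -
    have "drop (j - i) (drop (i + 1) \<sigma>) = drop (j + 1) \<sigma>" using ij by simp
    then show ?thesis by (metis append_take_drop_id)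
  qed
  moreover have "\<sigma> = take i \<sigma> @ \<sigma> ! i # drop (i + 1) \<sigma>"
    using ij by (simp add: id_take_nth_drop)
  ultimately have "\<sigma> = take i \<sigma> @ \<sigma> ! i # take (j - i) (drop (i + 1) \<sigma>) @ drop (j + 1) \<sigma>"
    by metis
  with \<tau> show ?thesis by (intro that) simp_all
qed

lemma nlrm_right_jump_le: "right_jump \<sigma> \<tau> \<Longrightarrow> nlrm \<tau> \<le> nlrm \<sigma> + 1"
proof -
  assume "right_jump \<sigma> \<tau>"
  then obtain A x B D where \<sigma>: "\<sigma> = A @ x # B @ D" and \<tau>: "\<tau> = A @ B @ x # D"
    by (rule right_jumpE)
  have "nlrm_after A B \<le> nlrm_after (A @ [x]) B" by (rule nlrm_after_mono) auto
  moreover have "nlrm_after (A @ B @ [x]) D = nlrm_after (A @ [x] @ B) D"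
    by (rule nlrm_after_cong) auto
  moreover have "nlrm_after (A @ B) [x] \<le> 1" using nlrm_after_le_length[of _ "[x]"] by simp
  ultimately show ?thesis
    unfolding nlrm_eq_nlrm_after \<sigma> \<tau>
    by (simp only: nlrm_after_append append_Cons[symmetric] append_Nil append.assoc[symmetric]) simp
qed

lemma nlrm_relpowp_right_jump_le: "(right_jump ^^ m) \<sigma> \<tau> \<Longrightarrow> nlrm \<tau> \<le> nlrm \<sigma> + m"
proof (induction m arbitrary: \<tau>)
  case (Suc m)
  then obtain \<rho> where "(right_jump ^^ m) \<sigma> \<rho>" "right_jump \<rho> \<tau>" by auto
  then show ?case using Suc.IH nlrm_right_jump_le by fastforce
qed simp

lemma nlrm_le_if_in_C: "\<sigma> \<in> C q \<Longrightarrow> nlrm \<sigma> \<le> q"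
proof -
  assume "\<sigma> \<in> C q"
  then obtain n m where "m \<le> q" "(right_jump ^^ m) [1..<Suc n] \<sigma>" unfolding C_def by blast
  moreover have "nlrm [1..<Suc n] = 0"
    by (simp add: nlrm_eq_nlrm_after nlrm_after_eq_0_iff del: upt_Suc)
  ultimately show ?thesis using nlrm_relpowp_right_jump_le by fastforce
qed

lemma perm_strict_sorted_eq_upt:
  assumes "is_perm \<sigma>" and "sorted_wrt (<) \<sigma>"
  shows "\<sigma> = [1..<Suc (length \<sigma>)]"
proof -
  have "set [1..<Suc (length \<sigma>)] = set \<sigma>"
    using assms(1) unfolding is_perm_def by (simp add: atLeastLessThanSuc_atLeastAtMost del: upt_Suc)
  then show ?thesis
    using strict_sorted_equal[OF _ assms(2)] by (simp del: upt_Suc)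
qed

text \<open>The jump undone here moves the first non-maximum x leftwards to just after the longest
  prefix of entries smaller than x.\<close>
lemma right_jump_to_perm_with_nlrm_Suc:
  assumes perm: "is_perm \<sigma>" and nlrm: "nlrm \<sigma> = Suc m"
  obtains \<sigma>' where "is_perm \<sigma>'" "length \<sigma>' = length \<sigma>" "nlrm \<sigma>' = m" "right_jump \<sigma>' \<sigma>"
proof -
  have "nlrm_after [] \<sigma> \<noteq> 0" using nlrm by (simp add: nlrm_eq_nlrm_after)
  then obtain A x D where \<sigma>: "\<sigma> = A @ x # D" and bigger: "\<exists>z\<in>set A. x \<le> z"
    by (elim nlrm_after_nonzeroE) auto
  define A1 where "A1 = takeWhile (\<lambda>z. z < x) A"
  define A2 where "A2 = dropWhile (\<lambda>z. z < x) A"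
  have A: "A = A1 @ A2" unfolding A1_def A2_def by simp
  have "A2 \<noteq> []" using bigger unfolding A2_def by (auto simp: dropWhile_eq_Nil_conv not_less)
  then obtain a A2' where a: "A2 = a # A2'" by (cases A2) auto
  have "\<not> a < x" using a unfolding A2_def by (metis hd_dropWhile list.sel(1) list.simps(3))
  moreover have "a \<noteq> x" using perm \<sigma> A a unfolding is_perm_def by auto
  ultimately have "x < a" by simp
  have A1_less: "\<forall>z\<in>set A1. z < x" unfolding A1_def by (auto dest: set_takeWhileD)
  define \<sigma>' where "\<sigma>' = A1 @ x # A2 @ D"
  have "right_jump \<sigma>' \<sigma>"
    unfolding right_jump_def
    by (rule exI[of _ "length A1"], rule exI[of _ "length A1 + length A2"])
       (use a in \<open>simp add: \<sigma>'_def \<sigma> A\<close>)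
  moreover have "is_perm \<sigma>'" using perm unfolding is_perm_def \<sigma>'_def \<sigma> A by auto
  moreover have "nlrm \<sigma>' = m"
  proof -
    have "nlrm_after (A1 @ A2) [x] = 1" using bigger A by auto
    moreover have "nlrm_after A1 [x] = 0" using A1_less by auto
    moreover have "nlrm_after (A1 @ [x] @ [a]) A2' = nlrm_after (A1 @ [a]) A2'"
      by (rule nlrm_after_cong) (use \<open>x < a\<close> in auto)
    then have "nlrm_after (A1 @ [x]) A2 = nlrm_after A1 A2" using a \<open>x < a\<close> by simp
    moreover have "nlrm_after (A1 @ A2 @ [x]) D = nlrm_after (A1 @ [x] @ A2) D"
      by (rule nlrm_after_cong) auto
    ultimately show ?thesis
      using nlrm unfolding nlrm_eq_nlrm_after \<sigma>'_def \<sigma> A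
      by (simp only: nlrm_after_append append_Cons[symmetric] append_Nil append.assoc[symmetric]) simp
  qed
  moreover have "length \<sigma>' = length \<sigma>" unfolding \<sigma>'_def \<sigma> A by simp
  ultimately show ?thesis using that by blast
qed

lemma relpowp_right_jump_from_upt:
  "is_perm \<sigma> \<Longrightarrow> nlrm \<sigma> = m \<Longrightarrow> (right_jump ^^ m) [1..<Suc (length \<sigma>)] \<sigma>"
proof (induction m arbitrary: \<sigma>)
  case 0
  then have "\<sigma> = [1..<Suc (length \<sigma>)]"
    using perm_strict_sorted_eq_upt by (simp add: nlrm_eq_nlrm_after nlrm_after_eq_0_iff)
  then show ?case by (metis relpowp.simps(1))
next
  case (Suc m)
  then obtain \<sigma>' where "is_perm \<sigma>'" "length \<sigma>' = length \<sigma>" "nlrm \<sigma>' = m" "right_jump \<sigma>' \<sigma>"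
    by (blast elim: right_jump_to_perm_with_nlrm_Suc)
  then show ?case using Suc.IH by (metis relpowp_Suc_I)
qed

lemma perm_in_C_iff:
  assumes "is_perm \<sigma>"
  shows "\<sigma> \<in> C q \<longleftrightarrow> nlrm \<sigma> \<le> q"
proof
  assume "nlrm \<sigma> \<le> q"
  moreover have "(right_jump ^^ nlrm \<sigma>) [1..<Suc (length \<sigma>)] \<sigma>"
    using assms by (rule relpowp_right_jump_from_upt) simp
  ultimately show "\<sigma> \<in> C q" unfolding C_def by blast
qed (rule nlrm_le_if_in_C)

lemma nlrm_order_iso:
  assumes "order_iso xs ys"
  shows "nlrm xs = nlrm ys"
proof -
  have "length xs = length ys" using assms by (simp add: order_iso_def)
  moreover have "(\<forall>k<i. xs ! k < xs ! i) \<longleftrightarrow> (\<forall>k<i. ys ! k < ys ! i)" if "i < length xs" for i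
    using assms that unfolding order_iso_def by auto
  ultimately have "{i. i < length xs \<and> \<not> (\<forall>k < i. xs ! k < xs ! i)} =
      {i. i < length ys \<and> \<not> (\<forall>k < i. ys ! k < ys ! i)}"
    by auto
  then show ?thesis unfolding nlrm_def by simp
qed

lemma order_iso_trans: "order_iso xs ys \<Longrightarrow> order_iso ys zs \<Longrightarrow> order_iso xs zs"
  unfolding order_iso_def by simp

lemma order_iso_iff_zip:
  "order_iso xs ys \<longleftrightarrow> length xs = length ys \<and>
     (\<forall>u\<in>set (zip xs ys). \<forall>v\<in>set (zip xs ys). fst u < fst v \<longleftrightarrow> snd u < snd v)"
proof
  assume iso: "order_iso xs ys"
  have "fst u < fst v \<longleftrightarrow> snd u < snd v"
    if u: "u \<in> set (zip xs ys)" and v: "v \<in> set (zip xs ys)" for u v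
  proof -
    obtain a where "xs ! a = fst u" "ys ! a = snd u" "a < length xs"
      using u unfolding in_set_zip by blast
    moreover obtain b where "xs ! b = fst v" "ys ! b = snd v" "b < length xs"
      using v unfolding in_set_zip by blast
    ultimately show ?thesis using iso unfolding order_iso_def by metis
  qed
  then show "length xs = length ys \<and>
      (\<forall>u\<in>set (zip xs ys). \<forall>v\<in>set (zip xs ys). fst u < fst v \<longleftrightarrow> snd u < snd v)"
    using iso by (simp add: order_iso_def)
next
  assume zip: "length xs = length ys \<and>
      (\<forall>u\<in>set (zip xs ys). \<forall>v\<in>set (zip xs ys). fst u < fst v \<longleftrightarrow> snd u < snd v)"
  have "xs ! a < xs ! b \<longleftrightarrow> ys ! a < ys ! b" if "a < length xs" "b < length xs" for a b
  proof -
    have "(xs ! a, ys ! a) \<in> set (zip xs ys)" "(xs ! b, ys ! b) \<in> set (zip xs ys)"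
      using that zip by (auto simp: in_set_zip)
    then show ?thesis using zip by fastforce
  qed
  then show "order_iso xs ys" using zip unfolding order_iso_def by blast
qed

lemma order_iso_nths:
  assumes "order_iso xs ys"
  shows "order_iso (nths xs I) (nths ys I)"
proof -
  define Z where "Z = nths (zip xs ys) I"
  have "length xs = length ys" using assms by (simp add: order_iso_def)
  then have fst: "map fst Z = nths xs I" and snd: "map snd Z = nths ys I"
    unfolding Z_def by (simp_all flip: nths_map)
  then have "zip (nths xs I) (nths ys I) = Z" by (metis zip_map_fst_snd)
  moreover have "set Z \<subseteq> set (zip xs ys)" unfolding Z_def by (rule set_nths_subset)
  ultimately show ?thesis using assms fst snd unfolding order_iso_iff_zip
    by (metis length_map subsetD)
qed

lemma standardization_exists:
  assumes "distinct xs"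
  obtains \<pi> where "is_perm \<pi>" and "order_iso \<pi> xs"
proof -
  define S where "S = set xs"
  define rank where "rank x = card {y\<in>S. y \<le> x}" for x
  have fin: "finite S" unfolding S_def by simp
  have rank_less: "rank x < rank x'" if "x \<in> S" "x' \<in> S" "x < x'" for x x'
  proof -
    have new: "x' \<in> {y\<in>S. y \<le> x'} - {y\<in>S. y \<le> x}" using that by auto
    have "{y\<in>S. y \<le> x} \<subset> {y\<in>S. y \<le> x'}"
      by (rule psubsetI) (use that in auto, use new in blast)
    then show ?thesis unfolding rank_def by (rule psubset_card_mono[rotated]) (simp add: fin)
  qed
  have rank_less_iff: "rank x < rank x' \<longleftrightarrow> x < x'" if "x \<in> S" "x' \<in> S" for x x'
    using rank_less[OF that] rank_less[OF that(2,1)] by (cases x x' rule: linorder_cases) auto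
  have inj: "inj_on rank S"
    by (rule inj_onI) (metis rank_less_iff less_irrefl linorder_neq_iff)
  have "rank ` S \<subseteq> {1..card S}"
  proof
    fix v assume "v \<in> rank ` S"
    then obtain x where x: "x \<in> S" "v = rank x" by auto
    have "card {y\<in>S. y \<le> x} > 0" using fin x by (subst card_gt_0_iff) auto
    moreover have "card {y\<in>S. y \<le> x} \<le> card S" using fin by (intro card_mono) auto
    ultimately show "v \<in> {1..card S}" unfolding x rank_def by simp
  qed
  then have "rank ` S = {1..card S}"
    by (rule card_subset_eq[rotated]) (use inj in \<open>simp_all add: card_image\<close>)
  then have "is_perm (map rank xs)" unfolding is_perm_def
    using assms inj distinct_card[OF assms] by (simp add: distinct_map S_def)
  moreover have "order_iso (map rank xs) xs" unfolding order_iso_def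
    using rank_less_iff by (simp add: S_def)
  ultimately show ?thesis by (rule that)
qed

lemma perm_nth_eq_card:
  assumes "is_perm \<pi>" and i: "i < length \<pi>"
  shows "\<pi> ! i = card {j. j < length \<pi> \<and> \<pi> ! j \<le> \<pi> ! i}"
proof -
  have dist: "distinct \<pi>" and set: "set \<pi> = {1..length \<pi>}"
    using assms(1) unfolding is_perm_def by auto
  have "nth \<pi> ` {j. j < length \<pi> \<and> \<pi> ! j \<le> \<pi> ! i} = {y \<in> set \<pi>. y \<le> \<pi> ! i}"
    by (auto simp: in_set_conv_nth)
  also have "\<dots> = {1..\<pi> ! i}" using set nth_mem[OF i] by auto
  finally have "card (nth \<pi> ` {j. j < length \<pi> \<and> \<pi> ! j \<le> \<pi> ! i}) = \<pi> ! i" by simp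
  moreover have "inj_on (nth \<pi>) {j. j < length \<pi> \<and> \<pi> ! j \<le> \<pi> ! i}"
    by (rule inj_on_nth[OF dist]) simp
  ultimately show ?thesis by (simp add: card_image)
qed

lemma perm_order_iso_eq:
  assumes "is_perm \<pi>" and "is_perm \<pi>'" and iso: "order_iso \<pi> \<pi>'"
  shows "\<pi> = \<pi>'"
proof (rule nth_equalityI)
  show len: "length \<pi> = length \<pi>'" using iso by (simp add: order_iso_def)
  fix i assume i: "i < length \<pi>"
  have "{j. j < length \<pi> \<and> \<pi> ! j \<le> \<pi> ! i} = {j. j < length \<pi>' \<and> \<pi>' ! j \<le> \<pi>' ! i}"
    using iso i len unfolding order_iso_def by (auto simp: not_less[symmetric])
  then show "\<pi> ! i = \<pi>' ! i"
    using perm_nth_eq_card[OF assms(1) i] perm_nth_eq_card[OF assms(2)] i len by simp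
qed

lemma nths_inter_lessThan_length: "nths xs (I \<inter> {..<length xs}) = nths xs I"
  unfolding nths_def by (rule arg_cong[where f="map fst"], rule filter_cong) (auto simp: set_zip)

lemma nths_append_suffix:
  assumes "I \<subseteq> {..<length A}"
  shows "nths (A @ B) (I \<union> {length A..}) = nths A I @ B"
proof -
  have "(I \<union> {length A..}) \<inter> {..<length A} = I \<inter> {..<length A}" using assms by auto
  then have "nths A (I \<union> {length A..}) = nths A I" by (metis nths_inter_lessThan_length)
  moreover have "nths B {j. j + length A \<in> I \<union> {length A..}} = B" by (rule nths_all) simp
  ultimately show ?thesis by (simp add: nths_append)
qed

lemma basis_nths_nlrm_le:
  assumes "\<sigma> \<in> basis q" and shorter: "length (nths \<sigma> I) < length \<sigma>"
  shows "nlrm (nths \<sigma> I) \<le> q"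
proof -
  have "distinct (nths \<sigma> I)" using assms(1) by (simp add: basis_def is_perm_def)
  then obtain \<rho> where \<rho>: "is_perm \<rho>" "order_iso \<rho> (nths \<sigma> I)" by (rule standardization_exists)
  then have "pattern \<rho> \<sigma>" unfolding pattern_def
    by (intro conjI exI[of _ "I \<inter> {..<length \<sigma>}"]) (simp_all add: nths_inter_lessThan_length)
  moreover have "\<rho> \<noteq> \<sigma>" using \<rho>(2) shorter by (auto simp: order_iso_def)
  ultimately have "\<rho> \<in> C q" using assms(1) by (simp add: basis_def)
  then show ?thesis using \<rho> by (simp add: perm_in_C_iff nlrm_order_iso)
qed

lemma proper_pattern_of_permE:
  assumes "is_perm \<pi>" and "pattern \<tau> \<pi>" and "\<tau> \<noteq> \<pi>"
  obtains I where "I \<subseteq> {..<length \<pi>}" "card I < length \<pi>" "order_iso \<tau> (nths \<pi> I)"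
proof -
  obtain I where I: "I \<subseteq> {..<length \<pi>}" and iso: "order_iso \<tau> (nths \<pi> I)"
    using assms(2) unfolding pattern_def by blast
  have "card I \<noteq> length \<pi>"
  proof
    assume "card I = length \<pi>"
    then have "I = {..<length \<pi>}" using I by (simp add: card_subset_eq)
    then have "order_iso \<tau> \<pi>" using iso by simp
    then show False using assms perm_order_iso_eq by (auto simp: pattern_def)
  qed
  moreover have "card I \<le> length \<pi>" using I by (metis card_lessThan card_mono finite_lessThan)
  ultimately show ?thesis using I iso that by simp
qed

lemma perm_in_basisI:
  assumes "is_perm \<pi>" and "nlrm \<pi> = Suc q"
    and "\<And>\<tau>. pattern \<tau> \<pi> \<Longrightarrow> \<tau> \<noteq> \<pi> \<Longrightarrow> nlrm \<tau> \<le> q"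
  shows "\<pi> \<in> basis q"
  using assms unfolding basis_def by (auto simp: perm_in_C_iff pattern_def)

lemma perm_split_at_max:
  assumes "is_perm \<sigma>" and "k < length \<sigma>" and "\<sigma> ! k = length \<sigma>"
  shows "\<sigma> = take k \<sigma> @ length \<sigma> # drop (Suc k) \<sigma>"
    and "\<forall>y\<in>set (take k \<sigma>). y < length \<sigma>"
    and "\<forall>y\<in>set (drop (Suc k) \<sigma>). y \<le> length \<sigma>"
proof -
  show \<sigma>: "\<sigma> = take k \<sigma> @ length \<sigma> # drop (Suc k) \<sigma>"
    using assms(2,3) id_take_nth_drop[of k \<sigma>] by simp
  have "distinct (take k \<sigma> @ length \<sigma> # drop (Suc k) \<sigma>)"
    and set_\<sigma>: "set (take k \<sigma> @ length \<sigma> # drop (Suc k) \<sigma>) = {1..length \<sigma>}"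
    using assms(1) unfolding is_perm_def \<sigma>[symmetric] by simp_all
  then show "\<forall>y\<in>set (take k \<sigma>). y < length \<sigma>" and "\<forall>y\<in>set (drop (Suc k) \<sigma>). y \<le> length \<sigma>"
    using set_\<sigma> by (fastforce simp: le_less)+
qed

text \<open>Keeping the maximum x and everything after it, a subsequence X of A yields the pattern
  X x D of \<sigma>, whose non-left-to-right maxima are those of X together with all of D.\<close>
lemma basis_prefix_nths_nlrm_le:
  assumes "\<sigma> \<in> basis q" and \<sigma>: "\<sigma> = A @ x # D"
    and "\<forall>y\<in>set A. y < x" and "\<forall>y\<in>set D. y \<le> x"
    and I: "I \<subseteq> {..<length A}" "card I < length A"
  shows "nlrm (nths A I) + length D \<le> q"
proof -
  have "nths \<sigma> (I \<union> {length A..}) = nths A I @ x # D"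
    unfolding \<sigma> using I(1) by (rule nths_append_suffix)
  moreover have "nlrm (nths A I @ x # D) = nlrm (nths A I) + length D"
    using assms(3,4) set_nths_subset[of A I] by (intro nlrm_append_max) auto
  moreover have "length (nths A I) = card I"
    using I(1) by (simp add: length_nths Collect_conj_eq lessThan_def[symmetric] Int_absorb1)
  ultimately show ?thesis
    using basis_nths_nlrm_le[OF assms(1), of "I \<union> {length A..}"] I by (simp add: \<sigma>)
qed

theorem mainTheorem6:
  fixes \<sigma> \<pi> :: "nat list" and n p k :: nat
  assumes "p \<ge> 1"
    and "is_perm \<sigma>" and "length \<sigma> = n"
    and "nlrm \<sigma> = p"
    and "\<sigma> \<in> basis (p - 1)"
    and "k < n" and "\<sigma> ! k = n"
    and "k \<ge> 1"
    and "is_perm \<pi>" and "length \<pi> = k" and "order_iso \<pi> (take k \<sigma>)"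
  shows "n \<le> p + k \<and> nlrm \<pi> = p + k + 1 - n \<and> \<pi> \<in> basis (p + k - n)"
proof -
  define A D where "A = take k \<sigma>" and "D = drop (Suc k) \<sigma>"
  have \<sigma>: "\<sigma> = A @ n # D" and A_less: "\<forall>y\<in>set A. y < n" and D_le: "\<forall>y\<in>set D. y \<le> n"
    using perm_split_at_max[OF assms(2)] assms(3,6,7) by (simp_all add: A_def D_def)
  have len: "length A = k" "length D = n - Suc k" using assms(3,6) by (simp_all add: A_def D_def)
  note bound = basis_prefix_nths_nlrm_le[OF assms(5) \<sigma> A_less D_le, unfolded len(1)]
  have nlrm_\<pi>: "nlrm \<pi> = nlrm A" using assms(11) by (simp add: A_def nlrm_order_iso)
  have "nlrm \<sigma> = nlrm A + length D" unfolding \<sigma> using A_less D_le by (rule nlrm_append_max)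
  moreover have "length D \<le> p - 1" using bound[of "{}"] assms(8) by simp
  ultimately have counts: "n \<le> p + k" "nlrm \<pi> = Suc (p + k - n)"
    using assms(1,4,6) len nlrm_\<pi> by linarith+
  have "\<pi> \<in> basis (p + k - n)"
  proof (rule perm_in_basisI[OF assms(9) counts(2)])
    fix \<tau> assume "pattern \<tau> \<pi>" "\<tau> \<noteq> \<pi>"
    then obtain I where I: "I \<subseteq> {..<k}" "card I < k" and "order_iso \<tau> (nths \<pi> I)"
      using assms(9,10) by (auto elim: proper_pattern_of_permE)
    then have "nlrm \<tau> = nlrm (nths A I)"
      using order_iso_nths[OF assms(11)] by (auto simp: A_def intro: nlrm_order_iso order_iso_trans)
    then show "nlrm \<tau> \<le> p + k - n" using bound[OF I] assms(6) len by linarith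
  qed
  then show ?thesis using counts by simp
qed

end
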